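(* The kernel of the homomorphism $j^{*}:\pi_{1}(Y_{1},(0,0))\rightarrow\pi_{1}(HA,(0,0))$ induced by the inclusion $j:Y_1\hookrightarrow HA$ is uncountable.
   Context: For $n\geq1$ let $X_{n}\subset\mathbb{R}^{2}$ be the circle of radius $\frac1n$ centered at $(\frac1n,0)$ and $Y_{1}=\bigcup_{i\geq1}X_{i}$ (the Hawaiian earring). Let $A_{n}\subset\mathbb{R}^2$ be the closed pinched annulus bounded by $X_{n}\cup X_{n+1}$ and $Y^{n}=Y_{1}\cup A_{1}\cup\dots\cup A_{n}$ with the Euclidean subspace topology. The harmonic archipelago $HA$ has underlying set $\bigcup_{n}Y^{n}$, with a topology such that each $Y^{n}$ inherits its usual topology and: (1) there is a sequence $z_{n}\in\operatorname{int}(A_{n})$ such that $\{z_{1},z_{2},\dots\}$ has no subsequential limit, and (2) if $p\in HA$ is a subsequential limit of a sequence $(y_n)$ with $y_{n}\in\operatorname{int}(A_{n})$ for all $n$, then $p=(0,0)$. *)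

theory Defs
  imports "HOL-Analysis.Analysis"
begin

definition HE_circle :: "nat \<Rightarrow> (real \<times> real) set" where
  "HE_circle n = sphere (1 / real n, 0) (1 / real n)"

definition Y1 :: "(real \<times> real) set" where
  "Y1 = (\<Union>n\<in>{1..}. HE_circle n)"

definition annulus :: "nat \<Rightarrow> (real \<times> real) set" where
  "annulus n = cball (1 / real n, 0) (1 / real n) - ball (1 / real (Suc n), 0) (1 / real (Suc n))"

definition Yn :: "nat \<Rightarrow> (real \<times> real) set" where
  "Yn n = Y1 \<union> (\<Union>i\<in>{1..n}. annulus i)"

definition HA_set :: "(real \<times> real) set" where
  "HA_set = (\<Union>n\<in>{1..}. Yn n)"

text \<open>A topology on the harmonic archipelago as described in the paper.
  Interior of A_n is taken in the plane.  Sequences are indexed so that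
  the n-th term lies in int(A_(n+1)).\<close>
definition HA_topology :: "(real \<times> real) topology \<Rightarrow> bool" where
  "HA_topology T \<longleftrightarrow>
     topspace T = HA_set \<and>
     (\<forall>n\<ge>1. subtopology T (Yn n) = top_of_set (Yn n)) \<and>
     (\<exists>z. (\<forall>n. z n \<in> interior (annulus (Suc n))) \<and>
          \<not> (\<exists>p r. strict_mono r \<and> limitin T (z \<circ> r) p sequentially)) \<and>
     (\<forall>y p r. (\<forall>n. y n \<in> interior (annulus (Suc n))) \<and> strict_mono r \<and>
          limitin T (y \<circ> r) p sequentially \<longrightarrow> p = (0, 0))"

text \<open>Loops in Y_1 based at (0,0); normalised to be constant (0,0) outside [0,1]
  so that the (library) homotopy relation only sees the values on [0,1].\<close>
definition Y1_loop :: "(real \<Rightarrow> real \<times> real) \<Rightarrow> bool" where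
  "Y1_loop g \<longleftrightarrow> path g \<and> path_image g \<subseteq> Y1 \<and> pathstart g = (0,0) \<and>
     pathfinish g = (0,0) \<and> (\<forall>t. t \<notin> {0..1} \<longrightarrow> g t = (0,0))"

text \<open>Loops whose class lies in the kernel of j^*: null-homotopic rel endpoints in HA.\<close>
definition kernel_loops :: "(real \<times> real) topology \<Rightarrow> (real \<Rightarrow> real \<times> real) set" where
  "kernel_loops T = {g. Y1_loop g \<and>
     homotopic_with (\<lambda>h. h 0 = (0,0) \<and> h 1 = (0,0)) (top_of_set {0..1}) T g (\<lambda>_. (0,0))}"

definition Y1_homotopy_rel :: "((real \<Rightarrow> real \<times> real) \<times> (real \<Rightarrow> real \<times> real)) set" where
  "Y1_homotopy_rel = {(g, h). Y1_loop g \<and> Y1_loop h \<and> homotopic_paths Y1 g h}"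

end

(*
  For S \<subseteq> \<nat> let w_S be the loop in Y_1 that runs once around X_(j+3) for each j \<in> S, in
  increasing order (an infinite concatenation converging to the origin), and let c = X_1 X_2^-1.
  Since c is null-homotopic in the pinched annulus A_1 \<subseteq> HA, every conjugate w_S c w_S^-1 lies
  in the kernel of j^*.

  These loops are pairwise non-homotopic in Y_1. For k \<in> \<nat>, collapse all circles but X_(k+3)
  and lift through exp: w_S ends at height 2\<pi>i if k \<in> S and at 0 otherwise, and c is traversed
  at that height. A second lift through exp, of the X_1-coordinate taken only on the sheet
  2\<pi>i of the first lift, therefore ends at 2\<pi>i or 0 according as k \<in> S. This is a
  homotopy invariant by the lifting property of the covering exp, so S \<mapsto> [w_S c w_S^-1]
  is injective on the uncountable set of subsets of \<nat>.
*)
theory Submission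
  imports Defs
begin

section \<open>Circles through the origin\<close>

lemma power2_dist_axis_point:
  fixes p :: "real \<times> real"
  shows "dist (r, 0) p ^ 2 = r ^ 2 + (fst p ^ 2 + snd p ^ 2 - 2 * r * fst p)"
proof -
  have "dist (r, 0) p ^ 2 = (r - fst p) ^ 2 + snd p ^ 2"
    by (cases p) (simp add: dist_Pair_Pair dist_real_def power2_abs)
  then show ?thesis
    by (simp add: power2_diff algebra_simps)
qed

lemma mem_sphere_through_origin:
  fixes p :: "real \<times> real"
  assumes "0 \<le> r"
  shows "p \<in> sphere (r, 0) r \<longleftrightarrow> fst p ^ 2 + snd p ^ 2 = 2 * r * fst p"
proof -
  have "p \<in> sphere (r, 0) r \<longleftrightarrow> dist (r, 0) p ^ 2 = r ^ 2"
    using assms by (simp add: power2_eq_iff_nonneg)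
  also have "\<dots> \<longleftrightarrow> fst p ^ 2 + snd p ^ 2 = 2 * r * fst p"
    by (simp add: power2_dist_axis_point)
  finally show ?thesis .
qed

lemma mem_cball_through_origin:
  fixes p :: "real \<times> real"
  assumes "0 \<le> r"
  shows "p \<in> cball (r, 0) r \<longleftrightarrow> fst p ^ 2 + snd p ^ 2 \<le> 2 * r * fst p"
proof -
  have "p \<in> cball (r, 0) r \<longleftrightarrow> dist (r, 0) p ^ 2 \<le> r ^ 2"
    using assms by (simp add: power_mono_iff)
  also have "\<dots> \<longleftrightarrow> fst p ^ 2 + snd p ^ 2 \<le> 2 * r * fst p"
    by (simp add: power2_dist_axis_point)
  finally show ?thesis .
qed

lemma mem_ball_through_origin:
  fixes p :: "real \<times> real"
  assumes "0 \<le> r"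
  shows "p \<in> ball (r, 0) r \<longleftrightarrow> fst p ^ 2 + snd p ^ 2 < 2 * r * fst p"
proof -
  have "p \<in> ball (r, 0) r \<longleftrightarrow> dist (r, 0) p ^ 2 < r ^ 2"
    using assms by (auto intro: power_strict_mono dest: power_less_imp_less_base)
  also have "\<dots> \<longleftrightarrow> fst p ^ 2 + snd p ^ 2 < 2 * r * fst p"
    by (simp add: power2_dist_axis_point)
  finally show ?thesis .
qed

lemma fst_nonneg_sphere_through_origin:
  fixes p :: "real \<times> real"
  assumes "0 \<le> r" "p \<in> sphere (r, 0) r"
  shows "0 \<le> fst p"
proof (rule ccontr)
  assume "\<not> 0 \<le> fst p"
  then have "2 * r * fst p \<le> 0" "0 < fst p ^ 2"
    using assms(1) by (simp_all add: mult_nonneg_nonpos)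
  moreover have "fst p ^ 2 + snd p ^ 2 = 2 * r * fst p"
    using assms mem_sphere_through_origin by blast
  ultimately show False
    using zero_le_power2[of "snd p"] by linarith
qed

lemma sphere_through_origin_subset_cball:
  fixes s R :: real
  assumes "0 \<le> s" "s \<le> R"
  shows "sphere (s, 0) s \<subseteq> (cball (R, 0) R :: (real \<times> real) set)"
proof
  fix p :: "real \<times> real"
  assume p: "p \<in> sphere (s, 0) s"
  have "fst p ^ 2 + snd p ^ 2 = 2 * s * fst p"
    using p assms(1) mem_sphere_through_origin by blast
  also have "\<dots> \<le> 2 * R * fst p"
    using fst_nonneg_sphere_through_origin[OF assms(1) p] assms by (simp add: mult_right_mono)
  finally show "p \<in> cball (R, 0) R"
    using assms mem_cball_through_origin by simp
qed

lemma sphere_through_origin_disjoint_ball: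
  fixes p :: "real \<times> real"
  assumes "0 \<le> r" "r \<le> s" "p \<in> sphere (s, 0) s"
  shows "p \<notin> ball (r, 0) r"
proof -
  have "0 \<le> s"
    using assms(1,2) by linarith
  have "2 * r * fst p \<le> 2 * s * fst p"
    using fst_nonneg_sphere_through_origin[OF \<open>0 \<le> s\<close> assms(3)] assms(2) by (simp add: mult_right_mono)
  also have "\<dots> = fst p ^ 2 + snd p ^ 2"
    using mem_sphere_through_origin[OF \<open>0 \<le> s\<close>] assms(3) by simp
  finally show ?thesis
    using mem_ball_through_origin[OF assms(1)] by simp
qed

lemma sphere_through_origin_inter_cball:
  fixes p :: "real \<times> real"
  assumes "0 \<le> r" "r < s" "p \<in> sphere (s, 0) s" "p \<in> cball (r, 0) r"
  shows "p = (0, 0)"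
proof -
  have "2 * s * fst p = fst p ^ 2 + snd p ^ 2"
    using assms mem_sphere_through_origin[of s p] by simp
  also have "\<dots> \<le> 2 * r * fst p"
    using assms mem_cball_through_origin by blast
  finally have "fst p = 0"
    using fst_nonneg_sphere_through_origin[of s p] mult_strict_right_mono[of r s "fst p"] assms
    by linarith
  then show ?thesis
    using assms(3) \<open>0 \<le> r\<close> \<open>r < s\<close> mem_sphere_through_origin[of s p]
    by (cases p) simp
qed

definition circle_loop :: "real \<Rightarrow> real \<Rightarrow> real \<times> real" where
  "circle_loop r t = r *\<^sub>R (1 - cos (2 * pi * t), sin (2 * pi * t))"

lemma circle_loop_in_sphere:
  assumes "0 \<le> r"
  shows "circle_loop r t \<in> sphere (r, 0) r"
proof -
  define c s where "c = cos (2 * pi * t)" and "s = sin (2 * pi * t)"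
  have "(r * (1 - c)) ^ 2 + (r * s) ^ 2 = r ^ 2 * ((1 - c) ^ 2 + s ^ 2)"
    by (simp only: power_mult_distrib distrib_left)
  also have "(1 - c) ^ 2 + s ^ 2 = 2 * (1 - c)"
    using sin_cos_squared_add[of "2 * pi * t"] by (simp add: c_def s_def power2_diff)
  finally have "(r * (1 - c)) ^ 2 + (r * s) ^ 2 = 2 * r * (r * (1 - c))"
    by (simp add: power2_eq_square)
  then show ?thesis
    unfolding mem_sphere_through_origin[OF assms] by (simp add: circle_loop_def c_def s_def)
qed

lemma circle_loop_of_nat [simp]: "circle_loop r (real j) = (0, 0)"
proof -
  have "2 * pi * real j = 2 * real j * pi"
    by simp
  then show ?thesis
    unfolding circle_loop_def by (simp only:) simp
qed

lemma circle_loop_0 [simp]: "circle_loop r 0 = (0, 0)"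
  and circle_loop_1 [simp]: "circle_loop r 1 = (0, 0)"
  using circle_loop_of_nat[of r 0] circle_loop_of_nat[of r 1] by simp_all

lemma continuous_on_circle_loop [continuous_intros]: "continuous_on A (circle_loop r)"
  unfolding circle_loop_def by (intro continuous_intros)

lemma norm_circle_loop:
  assumes "0 \<le> r"
  shows "norm (circle_loop r t) \<le> 2 * r"
proof -
  have "norm (circle_loop r t) \<le> norm ((r, 0) :: real \<times> real) + dist (r, 0) (circle_loop r t)"
    by (metis dist_norm norm_minus_commute norm_triangle_sub)
  then show ?thesis
    using circle_loop_in_sphere[OF assms, of t] assms by (simp add: norm_Pair)
qed

section \<open>Lifting through the exponential map\<close>

definition two_pi_i :: complex where
  "two_pi_i = 2 * pi * \<i>"

lemma exp_two_pi_i_mult: "exp (two_pi_i * of_real t) = cis (2 * pi * t)"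
  by (simp add: two_pi_i_def cis_conv_exp mult_ac)

lemma exp_two_pi_i [simp]: "exp two_pi_i = 1"
  using exp_two_pi_i_mult[of 1] by simp

lemma exp_eq_1_cases:
  assumes "exp w = 1"
  shows "w = two_pi_i \<or> 2 * pi \<le> dist w two_pi_i"
proof -
  obtain j :: int where re: "Re w = 0" and im: "Im w = of_int (2 * j) * pi"
    using assms exp_eq_1 by blast
  have "dist w two_pi_i = \<bar>Im w - 2 * pi\<bar>"
    using re by (simp add: two_pi_i_def dist_norm cmod_def)
  also have "Im w - 2 * pi = (real_of_int j - 1) * (2 * pi)"
    using im by (simp add: algebra_simps)
  finally have "dist w two_pi_i = \<bar>real_of_int j - 1\<bar> * (2 * pi)"
    by (simp add: abs_mult)
  moreover have "j = 1 \<or> 1 \<le> \<bar>real_of_int j - 1\<bar>"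
    by linarith
  ultimately show ?thesis
    using re im by (auto simp: two_pi_i_def complex_eq_iff)
qed

definition exp_lift :: "('a \<Rightarrow> complex) \<Rightarrow> (real \<Rightarrow> 'a) \<Rightarrow> (real \<Rightarrow> complex) \<Rightarrow> bool" where
  "exp_lift F g K \<longleftrightarrow> path K \<and> (\<forall>t\<in>{0..1}. exp (K t) = F (g t))"

lemma exp_lift_join:
  assumes "exp_lift F a Ka" "exp_lift F b Kb" "pathfinish Ka = pathstart Kb"
  shows "exp_lift F (a +++ b) (Ka +++ Kb)"
  unfolding exp_lift_def
proof (intro conjI ballI)
  show "path (Ka +++ Kb)"
    using assms by (simp add: exp_lift_def)
  fix t :: real
  assume "t \<in> {0..1}"
  then show "exp ((Ka +++ Kb) t) = F ((a +++ b) t)"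
    using assms(1,2) by (auto simp: exp_lift_def joinpaths_def)
qed

lemma exp_lift_reversepath:
  assumes "exp_lift F a Ka"
  shows "exp_lift F (reversepath a) (reversepath Ka)"
  using assms by (simp add: exp_lift_def) (simp add: reversepath_def)

lemma exp_lift_const:
  assumes "\<And>t. t \<in> {0..1} \<Longrightarrow> F (g t) = exp c"
  shows "exp_lift F g (\<lambda>_. c)"
  using assms by (simp add: exp_lift_def path_const)

lemma exp_lift_unique:
  assumes "exp_lift F g K" "exp_lift F g K'" "pathstart K = pathstart K'" "t \<in> {0..1}"
  shows "K t = K' t"
  by (rule covering_space_lift_unique[OF covering_space_exp_punctured_plane, of K 0 K' "{0..1}"
        "\<lambda>t. exp (K t)"]) (use assms in \<open>auto simp: exp_lift_def path_def pathstart_def intro!: continuous_intros\<close>)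

lemma exp_lift_square:
  fixes f :: "real \<times> real \<Rightarrow> complex"
  assumes "continuous_on ({0..1} \<times> {0..1}) f" "0 \<notin> f ` ({0..1} \<times> {0..1})"
    and "\<And>s. s \<in> {0..1} \<Longrightarrow> f (s, 0) = exp c"
  obtains k where "continuous_on ({0..1} \<times> {0..1}) k" "\<And>s. s \<in> {0..1} \<Longrightarrow> k (s, 0) = c"
    "\<And>z. z \<in> {0..1} \<times> {0..1} \<Longrightarrow> exp (k z) = f z"
proof (rule covering_space_lift_homotopy_alt[OF covering_space_exp_punctured_plane assms(1)])
  show "f \<in> {0..1} \<times> {0..1} \<rightarrow> - {0}"
    using assms(2) by force
qed (use assms(3) that in \<open>auto intro: continuous_on_const\<close>)

lemma Pair_joinpaths: "(\<lambda>t. ((a +++ b) t, (c +++ d) t)) = (\<lambda>t. (a t, c t)) +++ (\<lambda>t. (b t, d t))"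
  by (simp add: joinpaths_def fun_eq_iff)

definition exp_pullback :: "('a \<Rightarrow> complex) \<Rightarrow> 'a set \<Rightarrow> ('a \<times> complex) set" where
  "exp_pullback q Y = {(p, w). p \<in> Y \<and> exp w = q p}"

lemma homotopic_paths_exp_pullback:
  fixes q :: "'a::topological_space \<Rightarrow> complex"
  assumes q: "continuous_on Y q" "0 \<notin> q ` Y"
    and hom: "homotopic_paths Y g0 g1"
    and K: "exp_lift q g0 K0" "exp_lift q g1 K1" "pathstart K0 = pathstart K1"
  shows "homotopic_paths (exp_pullback q Y) (\<lambda>t. (g0 t, K0 t)) (\<lambda>t. (g1 t, K1 t))"
proof -
  let ?I = "{0..1::real}"
  obtain H where contH: "continuous_on (?I \<times> ?I) H" and H_in: "H \<in> ?I \<times> ?I \<rightarrow> Y"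
    and H0: "\<forall>t\<in>?I. H (0, t) = g0 t" and H1: "\<forall>t\<in>?I. H (1, t) = g1 t"
    and H_ends: "\<forall>s\<in>?I. pathstart (H \<circ> Pair s) = pathstart g0 \<and> pathfinish (H \<circ> Pair s) = pathfinish g0"
    using hom unfolding homotopic_paths by blast
  have "continuous_on (?I \<times> ?I) (q \<circ> H)"
    using contH H_in by (intro continuous_on_compose continuous_on_subset[OF q(1)]) auto
  moreover have "0 \<notin> (q \<circ> H) ` (?I \<times> ?I)"
    using H_in q(2) by force
  moreover have "(q \<circ> H) (s, 0) = exp (pathstart K0)" if "s \<in> ?I" for s
    using H_ends K(1) that by (auto simp: exp_lift_def pathstart_def)
  ultimately obtain k where contk: "continuous_on (?I \<times> ?I) k"
    and k_bottom: "\<And>s. s \<in> ?I \<Longrightarrow> k (s, 0) = pathstart K0"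
    and exp_k: "\<And>z. z \<in> ?I \<times> ?I \<Longrightarrow> exp (k z) = (q \<circ> H) z"
    by (rule exp_lift_square) auto
  have col: "exp_lift q (\<lambda>t. H (s, t)) (\<lambda>t. k (s, t))" if "s \<in> ?I" for s
    using that exp_k
    by (auto simp: exp_lift_def path_def intro!: continuous_on_compose2[OF contk] continuous_intros)
  have k_left: "k (0, t) = K0 t" and k_right: "k (1, t) = K1 t" if "t \<in> ?I" for t
    using exp_lift_unique[OF col[of 0], of K0] exp_lift_unique[OF col[of 1], of K1]
      K H0 H1 k_bottom that by (auto simp: exp_lift_def pathstart_def)
  have top: "exp_lift q (\<lambda>_. pathfinish g0) (\<lambda>s. k (s, 1))"
    using H_ends exp_k by (auto simp: exp_lift_def path_def pathfinish_def
        intro!: continuous_on_compose2[OF contk] continuous_intros)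
  have "exp_lift q (\<lambda>_. pathfinish g0) (\<lambda>_. K0 1)"
    using K(1) by (intro exp_lift_const) (simp add: exp_lift_def pathfinish_def)
  then have k_top: "k (s, 1) = K0 1" if "s \<in> ?I" for s
    using exp_lift_unique[OF top, of "\<lambda>_. K0 1" s] k_left[of 1] that
    by (simp add: pathstart_def)
  show ?thesis
    unfolding homotopic_paths
  proof (intro exI conjI ballI)
    show "continuous_on (?I \<times> ?I) (\<lambda>z. (H z, k z))"
      using contH contk by (intro continuous_intros)
    show "(\<lambda>z. (H z, k z)) \<in> ?I \<times> ?I \<rightarrow> exp_pullback q Y"
      using H_in exp_k by (force simp: exp_pullback_def)
  qed (use H0 H1 H_ends k_left k_right k_bottom k_top in \<open>simp_all add: pathstart_def pathfinish_def\<close>)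
qed

lemma exp_lift_pathfinish_homotopy_invariant:
  fixes F :: "'a::topological_space \<Rightarrow> complex"
  assumes F: "continuous_on Y F" "0 \<notin> F ` Y"
    and hom: "homotopic_paths Y g0 g1"
    and L: "exp_lift F g0 L0" "exp_lift F g1 L1" "pathstart L0 = pathstart L1"
  shows "pathfinish L0 = pathfinish L1"
proof -
  have F_in: "F \<in> Y \<rightarrow> - {0}"
    using F(2) by force
  have hom_F: "homotopic_paths (- {0}) (F \<circ> g0) (F \<circ> g1)"
    by (rule homotopic_paths_continuous_image[OF hom F(1) F_in])
  have "homotopic_paths UNIV L0 L1"
  proof (rule covering_space_lift_homotopic_paths[OF covering_space_exp_punctured_plane _ _ _ _ hom_F])
    show "path (F \<circ> g0)" "path (F \<circ> g1)"
      using homotopic_paths_imp_path[OF hom_F] by auto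
    show "path_image (F \<circ> g0) \<subseteq> - {0}" "path_image (F \<circ> g1) \<subseteq> - {0}"
      using homotopic_paths_imp_subset[OF hom_F] by auto
  qed (use L in \<open>auto simp: exp_lift_def\<close>)
  then show ?thesis
    by (rule homotopic_paths_imp_pathfinish)
qed

lemma homotopic_paths_conjugate_null:
  assumes "path p" "path_image p \<subseteq> S" "homotopic_paths S c (linepath a a)" "pathfinish p = a"
  shows "homotopic_paths S (p +++ (c +++ reversepath p)) (linepath (pathstart p) (pathstart p))"
proof -
  have p: "homotopic_paths S p p" and rev_p: "homotopic_paths S (reversepath p) (reversepath p)"
    using assms(1,2) by (simp_all add: path_image_reversepath)
  have "pathstart c = a" "pathfinish c = a"
    using homotopic_paths_imp_pathstart[OF assms(3)] homotopic_paths_imp_pathfinish[OF assms(3)]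
    by simp_all
  have "homotopic_paths S (c +++ reversepath p) (linepath a a +++ reversepath p)"
    using assms(3) rev_p by (rule homotopic_paths_join) (simp add: assms(4) \<open>pathfinish c = a\<close>)
  also have "homotopic_paths S (linepath a a +++ reversepath p) (reversepath p)"
    using assms by (intro homotopic_paths_lid') (simp_all add: path_image_reversepath)
  finally have "homotopic_paths S (p +++ (c +++ reversepath p)) (p +++ reversepath p)"
    using p by (intro homotopic_paths_join) (simp_all add: assms(4) \<open>pathstart c = a\<close>)
  also have "homotopic_paths S (p +++ reversepath p) (linepath (pathstart p) (pathstart p))"
    using assms(1,2) by (rule homotopic_paths_rinv)
  finally show ?thesis .
qed

lemma uncountable_UNIV_nat_set: "uncountable (UNIV :: nat set set)"
  using countable_eqpoll nat_sets_eqpoll_reals uncountable_UNIV_real eqpoll_sym by blast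

section \<open>Projections of the Hawaiian earring onto its circles\<close>

lemma origin_in_HE_circle [simp]: "(0, 0) \<in> HE_circle n"
  by (simp add: HE_circle_def dist_Pair_Pair)

lemma HE_circle_subset_cball:
  assumes "1 \<le> k" "k \<le> m"
  shows "HE_circle m \<subseteq> cball (1 / real k, 0) (1 / real k)"
  unfolding HE_circle_def using assms
  by (intro sphere_through_origin_subset_cball) (auto simp: frac_le)

lemma HE_circle_inter_cball:
  assumes "m < k" "p \<in> HE_circle m" "p \<in> cball (1 / real k, 0) (1 / real k)"
  shows "p = (0, 0)"
proof (cases "m = 0")
  case True
  then show ?thesis
    using assms(2) by (cases p) (simp add: HE_circle_def dist_Pair_Pair)
next
  case False
  then show ?thesis
    using assms unfolding HE_circle_def
    by (intro sphere_through_origin_inter_cball[of "1 / real k" "1 / real m"])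
       (auto simp: frac_less2)
qed

lemma HE_circle_inter:
  assumes "m \<noteq> n" "p \<in> HE_circle m" "p \<in> HE_circle n"
  shows "p = (0, 0)"
proof -
  have "p = (0, 0)" if "m < n" "p \<in> HE_circle m" "p \<in> HE_circle n" for m n
  proof (rule HE_circle_inter_cball[OF that(1,2)])
    show "p \<in> cball (1 / real n, 0) (1 / real n)"
      using that(3) by (auto simp: HE_circle_def)
  qed
  then show ?thesis
    using assms by (metis linorder_neqE_nat)
qed

lemma circle_loop_in_HE_circle: "circle_loop (1 / real n) t \<in> HE_circle n"
  unfolding HE_circle_def by (rule circle_loop_in_sphere) simp

text \<open>Identifies \<open>X\<^sub>n\<close> with the unit circle, the origin going to \<open>1\<close>, and collapses
  all other points to \<open>1\<close>.\<close>
definition circle_proj :: "nat \<Rightarrow> real \<times> real \<Rightarrow> complex" where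
  "circle_proj n p = (if p \<in> HE_circle n then Complex (1 - real n * fst p) (real n * snd p) else 1)"

lemma circle_proj_origin [simp]: "circle_proj n (0, 0) = 1"
  by (simp add: circle_proj_def complex_eq_iff)

lemma circle_proj_other_circle:
  assumes "m \<noteq> n" "p \<in> HE_circle m"
  shows "circle_proj n p = 1"
  using HE_circle_inter[OF assms] by (auto simp: circle_proj_def complex_eq_iff)

lemma circle_proj_circle_loop:
  assumes "1 \<le> n"
  shows "circle_proj n (circle_loop (1 / real n) t) = cis (2 * pi * t)"
  using assms circle_loop_in_HE_circle[of n t]
  by (simp add: circle_proj_def circle_loop_def complex_eq_iff)

lemma norm_circle_proj: "norm (circle_proj n p) = 1"
proof (cases "p \<in> HE_circle n \<and> n \<noteq> 0")
  case True
  then have "fst p ^ 2 + snd p ^ 2 = 2 * (1 / real n) * fst p"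
    using mem_sphere_through_origin[of "1 / real n" p] by (simp add: HE_circle_def)
  then have "real n * (fst p ^ 2 + snd p ^ 2) = 2 * fst p"
    using True by (simp add: field_simps)
  moreover have "(1 - real n * fst p) ^ 2 + (real n * snd p) ^ 2
      = 1 - 2 * real n * fst p + real n * (real n * (fst p ^ 2 + snd p ^ 2))"
    by (simp add: power2_eq_square algebra_simps)
  ultimately have "(1 - real n * fst p) ^ 2 + (real n * snd p) ^ 2 = 1"
    by simp
  then show ?thesis
    using True by (simp add: circle_proj_def cmod_def)
next
  case False
  then show ?thesis
    by (auto simp: circle_proj_def HE_circle_def cmod_def)
qed

lemma circle_proj_nonzero: "circle_proj n p \<noteq> 0"
  using norm_circle_proj[of n p] by auto

lemma continuous_on_circle_proj: "continuous_on Y1 (circle_proj n)"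
proof -
  define C where "C = cball (1 / real (Suc n), 0) (1 / real (Suc n)) \<union> (\<Union>m\<in>{..<n}. HE_circle m)"
  have "Y1 \<subseteq> HE_circle n \<union> C"
  proof
    fix p assume "p \<in> Y1"
    then obtain m where "1 \<le> m" "p \<in> HE_circle m"
      by (auto simp: Y1_def)
    then show "p \<in> HE_circle n \<union> C"
      using HE_circle_subset_cball[of "Suc n" m] unfolding C_def
      by (cases m n rule: linorder_cases) auto
  qed
  moreover have "continuous_on (HE_circle n \<union> C) (circle_proj n)"
  proof (rule continuous_on_closed_Un)
    show "closed (HE_circle n)" "closed C"
      unfolding HE_circle_def C_def by (intro closed_Un closed_UN closed_cball closed_sphere; simp)+
    show "continuous_on (HE_circle n) (circle_proj n)"
      by (rule continuous_on_eq[where f = "\<lambda>p. Complex (1 - real n * fst p) (real n * snd p)"])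
         (auto simp: circle_proj_def intro!: continuous_intros)
    have "p = (0, 0)" if "p \<in> C" "p \<in> HE_circle n" for p
      using that(1) unfolding C_def
    proof (elim UnE UN_E)
      show "p \<in> cball (1 / real (Suc n), 0) (1 / real (Suc n)) \<Longrightarrow> p = (0, 0)"
        using HE_circle_inter_cball[of n "Suc n" p] that(2) by simp
      show "m \<in> {..<n} \<Longrightarrow> p \<in> HE_circle m \<Longrightarrow> p = (0, 0)" for m
        using HE_circle_inter[of m n p] that(2) by simp
    qed
    then have "circle_proj n p = 1" if "p \<in> C" for p
      using that by (metis circle_proj_def circle_proj_origin)
    then show "continuous_on C (circle_proj n)"
      by (metis continuous_on_const continuous_on_eq)
  qed
  ultimately show ?thesis
    by (rule continuous_on_subset[rotated])
qed

text \<open>Over \<open>X\<^sub>1\<close> the pullback along \<open>circle_proj n\<close>, \<open>n \<noteq> 1\<close>, consists of the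
  discrete sheets \<open>w \<in> 2\<pi>i\<int>\<close>; \<open>sheet_proj\<close> follows \<open>X\<^sub>1\<close> on the sheet
  \<open>w = 2\<pi>i\<close> only.\<close>
definition sheet_proj :: "(real \<times> real) \<times> complex \<Rightarrow> complex" where
  "sheet_proj z =
     (if fst z \<in> HE_circle 1 \<and> dist (snd z) two_pi_i < pi then circle_proj 1 (fst z) else 1)"

lemma sheet_proj_nonzero: "sheet_proj z \<noteq> 0"
  by (simp add: sheet_proj_def circle_proj_nonzero)

lemma sheet_proj_other_circle:
  assumes "m \<noteq> 1" "p \<in> HE_circle m"
  shows "sheet_proj (p, w) = 1"
  using circle_proj_other_circle[OF assms] by (simp add: sheet_proj_def)

lemma continuous_on_sheet_proj:
  assumes "n \<noteq> 1"
  shows "continuous_on (exp_pullback (circle_proj n) Y1) sheet_proj"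
proof -
  define Z where "Z = exp_pullback (circle_proj n) Y1"
  define Z1 where "Z1 = Z \<inter> UNIV \<times> ball two_pi_i pi"
  define Z2 where "Z2 = Z \<inter> UNIV \<times> - cball two_pi_i (pi / 2)"
  have "Z = Z1 \<union> Z2"
    by (auto simp: Z1_def Z2_def) (use pi_gt_zero in linarith)
  have "continuous_on Z1 (circle_proj 1 \<circ> fst)"
    by (intro continuous_on_compose continuous_on_fst continuous_on_id
        continuous_on_subset[OF continuous_on_circle_proj]) (auto simp: Z1_def Z_def exp_pullback_def)
  then have "continuous_on Z1 sheet_proj"
    by (rule continuous_on_eq) (auto simp: Z1_def sheet_proj_def circle_proj_def dist_commute)
  moreover have "sheet_proj z = 1" if "z \<in> Z2" for z
  proof (cases "fst z \<in> HE_circle 1")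
    case True
    then have "exp (snd z) = 1"
      using that circle_proj_other_circle[of 1 n] assms by (auto simp: Z2_def Z_def exp_pullback_def)
    then have "pi \<le> dist (snd z) two_pi_i"
      using exp_eq_1_cases[of "snd z"] that pi_gt_zero by (auto simp: Z2_def dist_commute)
    then show ?thesis
      by (simp add: sheet_proj_def)
  qed (simp add: sheet_proj_def)
  then have "continuous_on Z2 sheet_proj"
    by (metis continuous_on_const continuous_on_eq)
  moreover have "openin (top_of_set (Z1 \<union> Z2)) Z1" "openin (top_of_set (Z1 \<union> Z2)) Z2"
    unfolding \<open>Z = Z1 \<union> Z2\<close>[symmetric] unfolding Z1_def Z2_def
    by (intro openin_open_Int open_Times open_UNIV open_ball open_Compl closed_cball)+
  ultimately show ?thesis
    using continuous_on_Un_local_open \<open>Z = Z1 \<union> Z2\<close> unfolding Z_def by metis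
qed

section \<open>The word loops\<close>

definition word_slot :: "nat set \<Rightarrow> nat \<Rightarrow> real \<Rightarrow> real \<times> real" where
  "word_slot S j x = (if j \<in> S then circle_loop (1 / real (j + 3)) x else (0, 0))"

definition word_line :: "nat set \<Rightarrow> real \<Rightarrow> real \<times> real" where
  "word_line S x = word_slot S (nat \<lfloor>x\<rfloor>) x"

text \<open>Reparametrising \<open>[0,\<infinity>)\<close> by \<open>t / (1 - t)\<close>, the loop \<open>word_loop S\<close> runs once
  around \<open>X\<^sub>j\<^sub>+\<^sub>3\<close> in its \<open>j\<close>-th time slot if \<open>j \<in> S\<close> and rests at the origin otherwise.
  It is continuous at \<open>t = 1\<close> because the radii shrink.\<close>
definition word_loop :: "nat set \<Rightarrow> real \<Rightarrow> real \<times> real" where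
  "word_loop S t = (if t < 1 then word_line S (t / (1 - t)) else (0, 0))"

lemma continuous_on_word_slot: "continuous_on A (word_slot S j)"
  by (cases "j \<in> S") (simp_all add: word_slot_def continuous_on_circle_loop continuous_on_const)

lemma word_line_eq_slot:
  assumes "real j \<le> x" "x \<le> real j + 1"
  shows "word_line S x = word_slot S j x"
proof (cases "x = real j + 1")
  case True
  then have "x = real (Suc j)"
    by simp
  then show ?thesis
    by (simp only: word_line_def word_slot_def circle_loop_of_nat if_cancel)
next
  case False
  then have "\<lfloor>x\<rfloor> = int j"
    using assms by (intro floor_unique) auto
  then show ?thesis
    by (simp add: word_line_def)
qed

lemma word_line_eq_slot_0:
  assumes "-1 \<le> x" "x \<le> 1"
  shows "word_line S x = word_slot S 0 x"
proof (cases "0 \<le> x")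
  case True
  then show ?thesis
    using word_line_eq_slot[of 0 x] assms by simp
next
  case False
  then have "nat \<lfloor>x\<rfloor> = 0"
    by linarith
  then show ?thesis
    by (simp add: word_line_def)
qed

lemma continuous_on_word_line: "continuous_on {-1..real N + 1} (word_line S)"
proof (induction N)
  case 0
  show ?case
    using word_line_eq_slot_0 by (intro continuous_on_eq[OF continuous_on_word_slot]) auto
next
  case (Suc N)
  have "continuous_on {real (Suc N)..real (Suc N) + 1} (word_line S)"
    using word_line_eq_slot[of "Suc N" _ S]
    by (intro continuous_on_eq[OF continuous_on_word_slot]) auto
  then have "continuous_on ({-1..real N + 1} \<union> {real (Suc N)..real (Suc N) + 1}) (word_line S)"
    by (intro continuous_on_closed_Un Suc.IH) auto
  moreover have "{-1..real N + 1} \<union> {real (Suc N)..real (Suc N) + 1} = {-1..real (Suc N) + 1}"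
    by auto
  ultimately show ?case
    by simp
qed

lemma isCont_word_line:
  assumes "-1 < x"
  shows "isCont (word_line S) x"
proof -
  obtain N :: nat where "x < real N"
    using reals_Archimedean2 by blast
  then show ?thesis
    using continuous_on_interior[OF continuous_on_word_line[of N S]] assms by simp
qed

lemma word_loop_0 [simp]: "word_loop S 0 = (0, 0)"
  and word_loop_1 [simp]: "word_loop S 1 = (0, 0)"
  by (simp_all add: word_loop_def word_line_def word_slot_def)

lemma norm_word_loop:
  assumes "0 \<le> t" "t \<le> 1"
  shows "norm (word_loop S t) \<le> 2 * (1 - t)"
proof (cases "t < 1")
  case True
  define x where "x = t / (1 - t)"
  have "0 \<le> x" "x + 1 = 1 / (1 - t)"
    using assms True by (simp_all add: x_def field_simps)
  define j where "j = nat \<lfloor>x\<rfloor>"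
  have "x + 1 \<le> real (j + 3)"
    using \<open>0 \<le> x\<close> unfolding j_def by linarith
  have "norm (word_slot S j x) \<le> 2 / real (j + 3)"
    using norm_circle_loop[of "1 / real (j + 3)" x] by (simp add: word_slot_def)
  also have "\<dots> \<le> 2 / (x + 1)"
    using \<open>0 \<le> x\<close> \<open>x + 1 \<le> real (j + 3)\<close> by (intro divide_left_mono) auto
  also have "\<dots> = 2 * (1 - t)"
    using \<open>x + 1 = 1 / (1 - t)\<close> by simp
  finally show ?thesis
    using True by (simp add: word_loop_def word_line_def j_def x_def)
qed (use assms in \<open>simp add: word_loop_def\<close>)

lemma isCont_word_loop:
  assumes "0 \<le> t" "t < 1"
  shows "isCont (word_loop S) t"
proof -
  have "isCont (\<lambda>s. s / (1 - s)) t"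
    using assms by (intro continuous_intros) auto
  moreover have "isCont (word_line S) (t / (1 - t))"
    using assms by (intro isCont_word_line) (simp add: field_simps)
  ultimately have cont: "isCont (\<lambda>s. word_line S (s / (1 - s))) t"
    by (rule isCont_o2)
  have "\<forall>\<^sub>F s in nhds t. s \<in> {..<1}"
    using assms by (intro eventually_nhds_in_open) auto
  then have "\<forall>\<^sub>F s in nhds t. word_loop S s = word_line S (s / (1 - s))"
    by (rule eventually_mono) (simp add: word_loop_def)
  then show ?thesis
    using cont by (simp add: isCont_cong)
qed

lemma word_loop_tendsto_1: "(word_loop S \<longlongrightarrow> 0) (at 1 within {0..1})"
proof (rule Lim_null_comparison)
  show "\<forall>\<^sub>F s in at 1 within {0..1}. norm (word_loop S s) \<le> 2 * (1 - s)"
    using norm_word_loop by (auto simp: eventually_at_filter)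
  have "((\<lambda>s. 2 * (1 - s)) \<longlongrightarrow> 2 * (1 - 1)) (at (1::real) within {0..1})"
    by (intro tendsto_intros)
  then show "((\<lambda>s::real. 2 * (1 - s)) \<longlongrightarrow> 0) (at 1 within {0..1})"
    by simp
qed

lemma path_word_loop: "path (word_loop S)"
  unfolding path_def continuous_on_eq_continuous_within
proof
  fix t :: real
  assume "t \<in> {0..1}"
  then consider "0 \<le> t" "t < 1" | "t = 1"
    by (cases "t < 1") auto
  then show "continuous (at t within {0..1}) (word_loop S)"
  proof cases
    case 1
    then have "isCont (word_loop S) t"
      by (rule isCont_word_loop)
    then show ?thesis
      by (rule continuous_at_imp_continuous_at_within)
  next
    case 2
    then show ?thesis
      using word_loop_tendsto_1 by (simp add: continuous_within zero_prod_def)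
  qed
qed

lemma word_loop_cases:
  "word_loop S t = (0, 0) \<or>
   (\<exists>j\<in>S. t < 1 \<and> nat \<lfloor>t / (1 - t)\<rfloor> = j \<and> word_loop S t = circle_loop (1 / real (j + 3)) (t / (1 - t)))"
  by (auto simp: word_loop_def word_line_def word_slot_def)

lemma word_loop_in_HE_circle: "\<exists>m\<ge>3. word_loop S t \<in> HE_circle m"
  using word_loop_cases[of S t] circle_loop_in_HE_circle origin_in_HE_circle
  by (metis le_add2)

lemma path_image_word_loop: "path_image (word_loop S) \<subseteq> Y1"
  using word_loop_in_HE_circle by (force simp: path_image_def Y1_def)

lemma circle_proj_word_loop:
  assumes "\<not> (k \<in> S \<and> t < 1 \<and> nat \<lfloor>t / (1 - t)\<rfloor> = k)"
  shows "circle_proj (k + 3) (word_loop S t) = 1"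
  using word_loop_cases[of S t]
proof (elim disjE bexE conjE)
  fix j
  assume "j \<in> S" "t < 1" "nat \<lfloor>t / (1 - t)\<rfloor> = j"
    and loop: "word_loop S t = circle_loop (1 / real (j + 3)) (t / (1 - t))"
  then have "j + 3 \<noteq> k + 3"
    using assms by auto
  moreover have "word_loop S t \<in> HE_circle (j + 3)"
    unfolding loop by (rule circle_loop_in_HE_circle)
  ultimately show ?thesis
    by (rule circle_proj_other_circle)
qed simp

text \<open>\<open>word_ramp k t\<close> is \<open>t / (1 - t) - k\<close> clamped to \<open>[0, 1]\<close>; the threshold
  \<open>(k + 1) / (k + 2)\<close> is where \<open>t / (1 - t) = k + 1\<close>.\<close>
definition word_ramp :: "nat \<Rightarrow> real \<Rightarrow> real" where
  "word_ramp k t = (if t \<le> (real k + 1) / (real k + 2) then max 0 (t / (1 - t) - real k) else 1)"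

lemma word_ramp_eq:
  assumes "t < 1"
  shows "word_ramp k t = min 1 (max 0 (t / (1 - t) - real k))"
proof -
  have "t \<le> (real k + 1) / (real k + 2) \<longleftrightarrow> t / (1 - t) \<le> real k + 1"
    using assms by (simp add: field_simps)
  then show ?thesis
    by (auto simp: word_ramp_def)
qed

lemma word_ramp_0 [simp]: "word_ramp k 0 = 0"
  and word_ramp_1 [simp]: "word_ramp k 1 = 1"
  by (simp_all add: word_ramp_def field_simps)

lemma continuous_on_word_ramp: "continuous_on {0..1} (word_ramp k)"
proof -
  define a where "a = (real k + 1) / (real k + 2)"
  have "0 \<le> a" "a < 1"
    by (simp_all add: a_def field_simps)
  have "max 0 (a / (1 - a) - real k) = 1"
    using \<open>a < 1\<close> by (simp add: a_def field_simps)
  then have "continuous_on ({0..a} \<union> {a..1}) (\<lambda>t. if t \<le> a then max 0 (t / (1 - t) - real k) else 1)"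
    using \<open>a < 1\<close> by (intro continuous_on_cases continuous_intros) auto
  moreover have "{0..a} \<union> {a..1} = {0..1}"
    using \<open>0 \<le> a\<close> \<open>a < 1\<close> by auto
  ultimately show ?thesis
    by (simp add: word_ramp_def a_def)
qed

definition word_lift :: "nat \<Rightarrow> nat set \<Rightarrow> real \<Rightarrow> complex" where
  "word_lift k S t = (if k \<in> S then two_pi_i * of_real (word_ramp k t) else 0)"

lemma pathstart_word_lift [simp]: "pathstart (word_lift k S) = 0"
  and pathfinish_word_lift: "pathfinish (word_lift k S) = (if k \<in> S then two_pi_i else 0)"
  by (simp_all add: pathstart_def pathfinish_def word_lift_def)

lemma exp_pathfinish_word_lift [simp]: "exp (pathfinish (word_lift k S)) = 1"
  by (simp add: pathfinish_word_lift)

lemma exp_word_lift_in_slot: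
  assumes "k \<in> S" "0 \<le> t" "t < 1" "nat \<lfloor>t / (1 - t)\<rfloor> = k"
  shows "exp (word_lift k S t) = circle_proj (k + 3) (word_loop S t)"
proof -
  define x where "x = t / (1 - t)"
  have "0 \<le> x"
    using assms by (simp add: x_def)
  then have "real k \<le> x" "x < real k + 1"
    using assms(4) unfolding x_def by linarith+
  then have "word_ramp k t = x - real k"
    using assms(3) word_ramp_eq[of t k] by (simp add: x_def)
  then have "exp (word_lift k S t) = cis (2 * pi * (x - real k))"
    using assms(1) by (simp add: word_lift_def exp_two_pi_i_mult del: of_real_diff)
  also have "\<dots> = cis (2 * pi * x)"
    using cis_multiple_2pi[of "real k"] by (simp only: right_diff_distrib cis_divide[symmetric]) simp
  also have "\<dots> = circle_proj (k + 3) (circle_loop (1 / real (k + 3)) x)"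
    by (rule circle_proj_circle_loop[symmetric]) simp
  also have "circle_loop (1 / real (k + 3)) x = word_loop S t"
    using assms by (simp add: word_loop_def word_line_def word_slot_def x_def)
  finally show ?thesis .
qed

lemma exp_lift_word_loop: "exp_lift (circle_proj (k + 3)) (word_loop S) (word_lift k S)"
  unfolding exp_lift_def
proof (intro conjI ballI)
  show "path (word_lift k S)"
    unfolding path_def word_lift_def using continuous_on_word_ramp[of k]
    by (cases "k \<in> S") (simp_all add: continuous_on_mult_left continuous_on_of_real continuous_on_const)
  fix t :: real
  assume t: "t \<in> {0..1}"
  show "exp (word_lift k S t) = circle_proj (k + 3) (word_loop S t)"
  proof (cases "k \<in> S \<and> t < 1 \<and> nat \<lfloor>t / (1 - t)\<rfloor> = k")
    case True
    then show ?thesis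
      using t exp_word_lift_in_slot by auto
  next
    case False
    have "word_ramp k t = 0 \<or> word_ramp k t = 1" if "k \<in> S"
    proof (cases "t < 1")
      case True
      define x where "x = t / (1 - t)"
      have "0 \<le> x"
        using t True by (simp add: x_def)
      define j where "j = nat \<lfloor>x\<rfloor>"
      have "real j \<le> x" "x < real j + 1"
        using \<open>0 \<le> x\<close> unfolding j_def by linarith+
      moreover have "j < k \<or> k < j"
        using False that True by (auto simp: x_def j_def)
      moreover have "real j + 1 \<le> real k" if "j < k"
        using that of_nat_le_iff[of "Suc j" k] by simp
      moreover have "real k + 1 \<le> real j" if "k < j"
        using that of_nat_le_iff[of "Suc k" j] by simp
      ultimately have "x < real k \<or> real k + 1 \<le> x"
        by linarith
      then show ?thesis
        using True word_ramp_eq[of t k] by (auto simp: x_def)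
    qed (use t in simp)
    then have "exp (word_lift k S t) = 1"
      by (auto simp: word_lift_def exp_two_pi_i_mult)
    then show ?thesis
      using False circle_proj_word_loop[of k S t] by simp
  qed
qed

section \<open>Conjugates of the annulus loop\<close>

definition annulus_loop :: "real \<Rightarrow> real \<times> real" where
  "annulus_loop = circle_loop 1 +++ reversepath (circle_loop (1 / 2))"

definition conj_loop :: "nat set \<Rightarrow> real \<Rightarrow> real \<times> real" where
  "conj_loop S = word_loop S +++ (annulus_loop +++ reversepath (word_loop S))"

definition conj_lift :: "nat \<Rightarrow> nat set \<Rightarrow> real \<Rightarrow> complex" where
  "conj_lift k S = word_lift k S +++ ((\<lambda>_. pathfinish (word_lift k S)) +++ reversepath (word_lift k S))"

lemma annulus_loop_in_HE_circle:
  "annulus_loop t \<in> HE_circle 1 \<or> annulus_loop t \<in> HE_circle 2"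
  using circle_loop_in_HE_circle[of 1] circle_loop_in_HE_circle[of 2]
  by (simp add: annulus_loop_def joinpaths_def reversepath_def)

lemma exp_lift_conj_loop: "exp_lift (circle_proj (k + 3)) (conj_loop S) (conj_lift k S)"
proof -
  have "(1::nat) \<noteq> k + 3" "(2::nat) \<noteq> k + 3"
    by simp_all
  then have "circle_proj (k + 3) (annulus_loop t) = 1" for t
    using annulus_loop_in_HE_circle[of t] circle_proj_other_circle by blast
  then have "circle_proj (k + 3) (annulus_loop t) = exp (pathfinish (word_lift k S))" for t
    by simp
  then show ?thesis
    unfolding conj_loop_def conj_lift_def
    by (intro exp_lift_join exp_lift_word_loop exp_lift_reversepath exp_lift_const)
       (simp_all add: pathstart_def pathfinish_def reversepath_def joinpaths_def)
qed

lemma pathstart_conj_lift [simp]: "pathstart (conj_lift k S) = 0"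
  by (simp add: conj_lift_def)

definition annulus_lift :: "complex \<Rightarrow> real \<Rightarrow> complex" where
  "annulus_lift h t = (if dist h two_pi_i < pi then two_pi_i * of_real (min 1 (2 * t)) else 0)"

lemma exp_lift_annulus_loop: "exp_lift sheet_proj (\<lambda>t. (annulus_loop t, h)) (annulus_lift h)"
  unfolding exp_lift_def
proof (intro conjI ballI)
  show "path (annulus_lift h)"
    unfolding path_def annulus_lift_def
    by (cases "dist h two_pi_i < pi") (auto intro!: continuous_intros)
  fix t :: real
  assume t: "t \<in> {0..1}"
  show "exp (annulus_lift h t) = sheet_proj (annulus_loop t, h)"
  proof (cases "t \<le> 1 / 2")
    case True
    then have "annulus_loop t = circle_loop 1 (2 * t)"
      by (simp add: annulus_loop_def joinpaths_def)
    moreover have "circle_loop 1 (2 * t) \<in> HE_circle 1"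
      using circle_loop_in_HE_circle[of 1] by simp
    moreover have "circle_proj 1 (circle_loop 1 (2 * t)) = cis (2 * pi * (2 * t))"
      using circle_proj_circle_loop[of 1 "2 * t"] by simp
    ultimately show ?thesis
      using True exp_two_pi_i_mult[of "2 * t"] by (simp add: annulus_lift_def sheet_proj_def)
  next
    case False
    then have "annulus_loop t \<in> HE_circle 2"
      using circle_loop_in_HE_circle[of 2] by (simp add: annulus_loop_def joinpaths_def reversepath_def)
    then have "sheet_proj (annulus_loop t, h) = 1"
      by (intro sheet_proj_other_circle[of 2]) simp_all
    then show ?thesis
      using False by (simp add: annulus_lift_def)
  qed
qed

lemma exp_lift_sheet_proj_conj_loop:
  obtains L where "exp_lift sheet_proj (\<lambda>t. (conj_loop S t, conj_lift k S t)) L"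
    "pathstart L = 0" "pathfinish L = (if k \<in> S then two_pi_i else 0)"
proof -
  define h where "h = pathfinish (word_lift k S)"
  define L where "L = (\<lambda>_. 0) +++ (annulus_lift h +++ (\<lambda>_. pathfinish (annulus_lift h)))"
  have word: "sheet_proj (word_loop S t, w) = 1" for t w
  proof -
    obtain m where "3 \<le> m" "word_loop S t \<in> HE_circle m"
      using word_loop_in_HE_circle by blast
    then show ?thesis
      by (intro sheet_proj_other_circle[of m]) auto
  qed
  have "exp_lift sheet_proj (\<lambda>t. (word_loop S t, word_lift k S t)) (\<lambda>_. 0)"
    by (rule exp_lift_const) (simp add: word)
  moreover have "exp_lift sheet_proj (\<lambda>t. (reversepath (word_loop S) t, reversepath (word_lift k S) t))
      (\<lambda>_. pathfinish (annulus_lift h))"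
    by (rule exp_lift_const) (simp add: word reversepath_def annulus_lift_def pathfinish_def)
  ultimately have "exp_lift sheet_proj (\<lambda>t. (conj_loop S t, conj_lift k S t)) L"
    unfolding conj_loop_def conj_lift_def Pair_joinpaths L_def h_def[symmetric]
    by (intro exp_lift_join exp_lift_annulus_loop)
       (simp_all add: pathstart_def pathfinish_def annulus_lift_def joinpaths_def)
  moreover have "pathfinish L = (if k \<in> S then two_pi_i else 0)"
  proof -
    have "pathfinish L = pathfinish (annulus_lift h)"
      by (simp add: L_def pathfinish_def joinpaths_def)
    also have "\<dots> = (if dist h two_pi_i < pi then two_pi_i else 0)"
      by (simp add: annulus_lift_def pathfinish_def)
    finally have "pathfinish L = (if dist h two_pi_i < pi then two_pi_i else 0)" .
    moreover have "h = (if k \<in> S then two_pi_i else 0)"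
      by (simp add: h_def pathfinish_word_lift)
    moreover have "dist 0 two_pi_i = 2 * pi"
      by (simp add: two_pi_i_def norm_mult)
    ultimately show ?thesis
      by auto
  qed
  moreover have "pathstart L = 0"
    by (simp add: L_def pathstart_def joinpaths_def)
  ultimately show ?thesis
    using that by blast
qed

lemma conj_loop_homotopic_imp_eq:
  assumes "homotopic_paths Y1 (conj_loop S) (conj_loop S')"
  shows "S = S'"
proof (rule set_eqI)
  fix k
  let ?Z = "exp_pullback (circle_proj (k + 3)) Y1"
  have "0 \<notin> circle_proj (k + 3) ` Y1"
    using circle_proj_nonzero by auto
  then have hom: "homotopic_paths ?Z
      (\<lambda>t. (conj_loop S t, conj_lift k S t)) (\<lambda>t. (conj_loop S' t, conj_lift k S' t))"
    using continuous_on_circle_proj assms exp_lift_conj_loop pathstart_conj_lift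
    by (intro homotopic_paths_exp_pullback) simp_all
  obtain L where L: "exp_lift sheet_proj (\<lambda>t. (conj_loop S t, conj_lift k S t)) L"
    "pathstart L = 0" "pathfinish L = (if k \<in> S then two_pi_i else 0)"
    by (rule exp_lift_sheet_proj_conj_loop)
  obtain L' where L': "exp_lift sheet_proj (\<lambda>t. (conj_loop S' t, conj_lift k S' t)) L'"
    "pathstart L' = 0" "pathfinish L' = (if k \<in> S' then two_pi_i else 0)"
    by (rule exp_lift_sheet_proj_conj_loop)
  have "0 \<notin> sheet_proj ` ?Z"
    using sheet_proj_nonzero by auto
  then have "pathfinish L = pathfinish L'"
    using continuous_on_sheet_proj[of "k + 3"] hom L L'
    by (intro exp_lift_pathfinish_homotopy_invariant[of ?Z sheet_proj]) simp_all
  moreover have "two_pi_i \<noteq> 0"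
    by (simp add: two_pi_i_def)
  ultimately show "k \<in> S \<longleftrightarrow> k \<in> S'"
    using L(3) L'(3) by (simp split: if_splits)
qed

section \<open>The kernel of the inclusion\<close>

lemma circle_loop_segment_in_annulus:
  assumes "0 \<le> u" "u \<le> 1"
  shows "(1 - u) *\<^sub>R circle_loop 1 t + u *\<^sub>R circle_loop (1 / 2) t \<in> annulus 1"
proof -
  have "(1 - u) *\<^sub>R circle_loop 1 t + u *\<^sub>R circle_loop (1 / 2) t = circle_loop (1 - u / 2) t"
    by (simp add: circle_loop_def scaleR_add_left[symmetric] algebra_simps)
  moreover have "circle_loop (1 - u / 2) t \<in> sphere (1 - u / 2, 0) (1 - u / 2)"
    using assms by (intro circle_loop_in_sphere) simp
  ultimately show ?thesis
    using assms sphere_through_origin_subset_cball[of "1 - u / 2" 1]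
      sphere_through_origin_disjoint_ball[of "1 / 2" "1 - u / 2"]
    by (auto simp: annulus_def)
qed

lemma homotopic_paths_annulus_loop: "homotopic_paths (annulus 1) annulus_loop (linepath (0, 0) (0, 0))"
proof -
  have hom: "homotopic_paths (annulus 1) (circle_loop 1) (circle_loop (1 / 2))"
  proof (rule homotopic_paths_linear)
    show "path (circle_loop 1)" "path (circle_loop (1 / 2))"
      by (simp_all add: path_def continuous_on_circle_loop)
    show "pathstart (circle_loop (1 / 2)) = pathstart (circle_loop 1)"
      "pathfinish (circle_loop (1 / 2)) = pathfinish (circle_loop 1)"
      by (simp_all add: pathstart_def pathfinish_def)
    show "closed_segment (circle_loop 1 t) (circle_loop (1 / 2) t) \<subseteq> annulus 1" for t
      using circle_loop_segment_in_annulus by (auto simp: closed_segment_def)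
  qed
  then have "path (circle_loop (1 / 2))" "path_image (circle_loop (1 / 2)) \<subseteq> annulus 1"
    using homotopic_paths_imp_path homotopic_paths_imp_subset by blast+
  then have "homotopic_paths (annulus 1) (reversepath (circle_loop (1 / 2)))
      (reversepath (circle_loop (1 / 2)))"
    by (simp add: path_image_reversepath)
  with hom have "homotopic_paths (annulus 1) annulus_loop
      (circle_loop (1 / 2) +++ reversepath (circle_loop (1 / 2)))"
    unfolding annulus_loop_def
    by (rule homotopic_paths_join) (simp add: pathstart_def pathfinish_def reversepath_def)
  also have "homotopic_paths (annulus 1) (circle_loop (1 / 2) +++ reversepath (circle_loop (1 / 2)))
      (linepath (0, 0) (0, 0))"
    using homotopic_paths_rinv[OF \<open>path (circle_loop (1 / 2))\<close>
        \<open>path_image (circle_loop (1 / 2)) \<subseteq> annulus 1\<close>]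
    by (simp add: pathstart_def)
  finally show ?thesis .
qed

lemma homotopic_paths_conj_loop: "homotopic_paths (Yn 1) (conj_loop S) (linepath (0, 0) (0, 0))"
proof -
  have "path_image (word_loop S) \<subseteq> Yn 1" "annulus 1 \<subseteq> Yn 1"
    using path_image_word_loop by (auto simp: Yn_def)
  then have "homotopic_paths (Yn 1) (word_loop S +++ (annulus_loop +++ reversepath (word_loop S)))
      (linepath (pathstart (word_loop S)) (pathstart (word_loop S)))"
    using path_word_loop homotopic_paths_subset[OF homotopic_paths_annulus_loop]
    by (intro homotopic_paths_conjugate_null) (simp_all add: pathfinish_def)
  then show ?thesis
    by (simp add: conj_loop_def pathstart_def)
qed

lemma path_conj_loop: "path (conj_loop S)"
  unfolding conj_loop_def annulus_loop_def
  by (intro path_join_imp path_word_loop path_reversepath[THEN iffD2])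
     (simp_all add: path_def continuous_on_circle_loop pathstart_def pathfinish_def reversepath_def
       joinpaths_def)

lemma path_image_conj_loop: "path_image (conj_loop S) \<subseteq> Y1"
proof -
  have "path_image (circle_loop (1 / real n)) \<subseteq> Y1" if "1 \<le> n" for n
    using circle_loop_in_HE_circle[of n] that by (auto simp: path_image_def Y1_def)
  from this[of 1] this[of 2] show ?thesis
    unfolding conj_loop_def annulus_loop_def using path_image_word_loop
    by (intro subset_trans[OF path_image_join_subset] Un_least) (auto simp: path_image_reversepath)
qed

text \<open>\<open>Y1_loop\<close> demands the value \<open>(0, 0)\<close> outside \<open>[0, 1]\<close>.\<close>
definition kernel_loop :: "nat set \<Rightarrow> real \<Rightarrow> real \<times> real" where
  "kernel_loop S t = (if t \<in> {0..1} then conj_loop S t else (0, 0))"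

lemma homotopic_paths_conj_loop_kernel_loop:
  assumes "path_image (conj_loop S) \<subseteq> A"
  shows "homotopic_paths A (conj_loop S) (kernel_loop S)"
  using path_conj_loop assms by (rule homotopic_paths_eq) (simp add: kernel_loop_def)

lemma Y1_loop_kernel_loop: "Y1_loop (kernel_loop S)"
proof -
  have "path (kernel_loop S)"
    using homotopic_paths_conj_loop_kernel_loop[OF path_image_conj_loop]
    by (metis homotopic_paths_imp_path)
  moreover have "path_image (kernel_loop S) = path_image (conj_loop S)"
    by (auto simp: path_image_def kernel_loop_def)
  ultimately show ?thesis
    using path_image_conj_loop
    by (simp add: Y1_loop_def pathstart_def pathfinish_def kernel_loop_def conj_loop_def
        joinpaths_def reversepath_def)
qed

lemma kernel_loop_homotopic_imp_eq:
  assumes "homotopic_paths Y1 (kernel_loop S) (kernel_loop S')"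
  shows "S = S'"
proof (rule conj_loop_homotopic_imp_eq)
  have "homotopic_paths Y1 (conj_loop S) (kernel_loop S)"
    by (rule homotopic_paths_conj_loop_kernel_loop[OF path_image_conj_loop])
  also note assms
  also have "homotopic_paths Y1 (kernel_loop S') (conj_loop S')"
    by (rule homotopic_paths_sym[OF homotopic_paths_conj_loop_kernel_loop[OF path_image_conj_loop]])
  finally show "homotopic_paths Y1 (conj_loop S) (conj_loop S')" .
qed

lemma kernel_loop_in_kernel_loops:
  assumes "HA_topology T"
  shows "kernel_loop S \<in> kernel_loops T"
proof -
  have "path_image (conj_loop S) \<subseteq> Yn 1"
    using path_image_conj_loop by (auto simp: Yn_def)
  then have "homotopic_paths (Yn 1) (kernel_loop S) (linepath (0, 0) (0, 0))"
    using homotopic_paths_conj_loop_kernel_loop homotopic_paths_conj_loop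
    by (meson homotopic_paths_sym homotopic_paths_trans)
  then have "homotopic_with (\<lambda>h. h 0 = (0, 0) \<and> h 1 = (0, 0))
      (top_of_set {0..1}) (top_of_set (Yn 1)) (kernel_loop S) (\<lambda>_. (0, 0))"
    using Y1_loop_kernel_loop[of S]
    by (simp add: homotopic_paths_def Y1_loop_def linepath_refl pathstart_def pathfinish_def)
  moreover have "continuous_map (top_of_set (Yn 1)) T id"
    using assms continuous_map_from_subtopology[OF continuous_map_id, of T "Yn 1"]
    by (simp add: HA_topology_def)
  ultimately have "homotopic_with (\<lambda>h. h 0 = (0, 0) \<and> h 1 = (0, 0))
      (top_of_set {0..1}) T (id \<circ> kernel_loop S) (id \<circ> (\<lambda>_. (0, 0)))"
    by (rule homotopic_with_compose_continuous_map_left) simp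
  then show ?thesis
    using Y1_loop_kernel_loop[of S] by (simp add: kernel_loops_def)
qed

theorem corollary8:
  assumes "HA_topology T"
  shows "uncountable (kernel_loops T // Y1_homotopy_rel)"
proof
  define cls where "cls S = Y1_homotopy_rel `` {kernel_loop S}" for S
  have "range cls \<subseteq> kernel_loops T // Y1_homotopy_rel"
    using kernel_loop_in_kernel_loops[OF assms] by (auto simp: cls_def intro: quotientI)
  moreover have "inj cls"
  proof (rule injI)
    fix S S'
    assume "cls S = cls S'"
    moreover have "kernel_loop S' \<in> cls S'"
      using Y1_loop_kernel_loop[of S'] by (simp add: cls_def Y1_homotopy_rel_def Y1_loop_def)
    ultimately have "(kernel_loop S, kernel_loop S') \<in> Y1_homotopy_rel"
      unfolding cls_def by blast
    then show "S = S'"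
      by (simp add: Y1_homotopy_rel_def kernel_loop_homotopic_imp_eq)
  qed
  moreover assume "countable (kernel_loops T // Y1_homotopy_rel)"
  ultimately show False
    using uncountable_UNIV_nat_set countable_image_inj_on countable_subset by blast
qed

end
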